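(* In the setting described in the context, let $q\in\{1,\dots,n\}$. The following are equivalent: (1) there exists a $q$-maxitive capacity $\mu:2^{\mathcal C}\to L$ with $S_\mu(x^{(k)})=\alpha^{(k)}$ for all $k\in\{1,\dots,N\}$; (2) the reduced system $(S_q)$ is consistent and there exists $A\subseteq\mathcal C$ with $|A|=q$ and $e_q(A)=1$.
   Context: Let $\mathcal C=\{1,\dots,n\}$ and let $L$ be either a finite totally ordered set $0=\xi_1<\dots<\xi_l=1$ or $L=[0,1]$. A capacity is a map $\mu:2^{\mathcal C}\to L$ with $\mu(\emptyset)=0$, $\mu(\mathcal C)=1$, monotone for inclusion; it is $q$-maxitive if for all $X$ with $|X|>q$, $\mu(X)=\max_{Y\subsetneq X,\ |Y|\le q}\mu(Y)$. Sugeno integral: $S_\mu(x)=\max_{A\subseteq\mathcal C}\min(\min_{i\in A}x_i,\mu(A))$ with $\min_{i\in\emptyset}x_i=1$. Training data: $N$ pairs $(x^{(k)},\alpha^{(k)})$, $x^{(k)}\in L^n$, $\alpha^{(k)}\in L$. For nonempty $A$, $m_{k,A}=\min_{i\in A}x^{(k)}_i$. The reduced system $(S_q)$ has unknowns $\xi_A\in L$ for $A\subseteq\mathcal C$ with $0<|A|\le q$, and equations $\max_{0<|A|\le q}\min(m_{k,A},\xi_A)=\alpha^{(k)}$, $k=1,\dots,N$; it is consistent if it has a solution in $L$. For $0<|A|\le q$, $e_q(A)=\min_{1\le k\le N}(m_{k,A}\to_G\alpha^{(k)})$, where $a\to_G b=1$ if $a\le b$ and $a\to_G b=b$ otherwise.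 *)

theory Defs
  imports Complex_Main
begin

text \<open>The scale L is modelled as a subset of the reals: either a finite chain
containing 0 and 1 inside [0,1], or the whole interval [0,1].\<close>
definition valid_scale :: "real set \<Rightarrow> bool" where
  "valid_scale L \<longleftrightarrow> 0 \<in> L \<and> 1 \<in> L \<and> L \<subseteq> {0..1} \<and> (finite L \<or> L = {0..1})"

definition crit :: "nat \<Rightarrow> nat set" where
  "crit n = {1..n}"

definition minx :: "(nat \<Rightarrow> real) \<Rightarrow> nat set \<Rightarrow> real" where
  "minx x A = (if A = {} then 1 else Min (x ` A))"

definition capacity :: "real set \<Rightarrow> nat \<Rightarrow> (nat set \<Rightarrow> real) \<Rightarrow> bool" where
  "capacity L n mu \<longleftrightarrow>
     (\<forall>A. A \<subseteq> crit n \<longrightarrow> mu A \<in> L) \<and> mu {} = 0 \<and> mu (crit n) = 1 \<and>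
     (\<forall>A B. A \<subseteq> B \<and> B \<subseteq> crit n \<longrightarrow> mu A \<le> mu B)"

definition q_maxitive :: "nat \<Rightarrow> nat \<Rightarrow> (nat set \<Rightarrow> real) \<Rightarrow> bool" where
  "q_maxitive n q mu \<longleftrightarrow>
     (\<forall>X. X \<subseteq> crit n \<and> card X > q \<longrightarrow> mu X = Max {mu Y | Y. Y \<subset> X \<and> card Y \<le> q})"

definition sugeno :: "nat \<Rightarrow> (nat set \<Rightarrow> real) \<Rightarrow> (nat \<Rightarrow> real) \<Rightarrow> real" where
  "sugeno n mu x = Max {min (minx x A) (mu A) | A. A \<subseteq> crit n}"

definition goedel_imp :: "real \<Rightarrow> real \<Rightarrow> real" where
  "goedel_imp a b = (if a \<le> b then 1 else b)"

text \<open>Subsets A of C with 0 < |A| \<le> q (the unknowns of the reduced system).\<close>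
definition small_sets :: "nat \<Rightarrow> nat \<Rightarrow> nat set set" where
  "small_sets n q = {A. A \<subseteq> crit n \<and> 0 < card A \<and> card A \<le> q}"

text \<open>Consistency of the reduced system (S_q); data x k i (k-th example, criterion i), alpha k.\<close>
definition reduced_consistent ::
  "real set \<Rightarrow> nat \<Rightarrow> nat \<Rightarrow> nat \<Rightarrow> (nat \<Rightarrow> nat \<Rightarrow> real) \<Rightarrow> (nat \<Rightarrow> real) \<Rightarrow> bool" where
  "reduced_consistent L n q N x alpha \<longleftrightarrow>
     (\<exists>\<xi> :: nat set \<Rightarrow> real.
        (\<forall>A \<in> small_sets n q. \<xi> A \<in> L) \<and>
        (\<forall>k \<in> {1..N}. Max {min (minx (x k) A) (\<xi> A) | A. A \<in> small_sets n q} = alpha k))"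

text \<open>e_q(A) = min over k of (m_{k,A} \<rightarrow>_G alpha_k); the empty minimum (N = 0) is 1,
 the top of L (all implication values lie in [0,1]).\<close>
definition e_q :: "nat \<Rightarrow> (nat \<Rightarrow> nat \<Rightarrow> real) \<Rightarrow> (nat \<Rightarrow> real) \<Rightarrow> nat set \<Rightarrow> real" where
  "e_q N x alpha A = Min (insert 1 {goedel_imp (minx (x k) A) (alpha k) | k. k \<in> {1..N}})"

end

theory Submission
  imports Defs
begin

(* The Sugeno integral of a q-maxitive capacity only sees its values on the nonempty sets
   of size at most q, so such a capacity fits the data iff its restriction solves (S_q).
   Maxitivity also attains mu C = 1 on a set of size at most q, hence by monotonicity on a
   set A of size exactly q; then min (m_{k,A}) 1 <= alpha_k, i.e. e_q(A) = 1. Conversely,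
   given a solution xi of (S_q) and such an A, raising xi(A) to 1 keeps (S_q) solved, and
   mu X = max {xi Y | Y small, Y <= X} is a q-maxitive capacity with the same integrals. *)

lemma finite_subset_crit: "A \<subseteq> crit n \<Longrightarrow> finite A"
  by (simp add: crit_def finite_subset)

lemma finite_small_sets: "finite (small_sets n q)"
  unfolding small_sets_def crit_def by (rule finite_subset[of _ "Pow {1..n}"]) auto

lemma small_sets_not_empty: "1 \<le> q \<Longrightarrow> q \<le> n \<Longrightarrow> small_sets n q \<noteq> {}"
proof -
  assume "1 \<le> q" "q \<le> n"
  then have "{1} \<in> small_sets n q"
    by (simp add: small_sets_def crit_def)
  then show ?thesis
    by blast
qed

lemma small_sets_subset: "A \<in> small_sets n q \<Longrightarrow> A \<subseteq> crit n"
  by (simp add: small_sets_def)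

lemma capacity_mono: "capacity L n mu \<Longrightarrow> A \<subseteq> B \<Longrightarrow> B \<subseteq> crit n \<Longrightarrow> mu A \<le> mu B"
  by (simp add: capacity_def)

lemma capacity_nonneg: "capacity L n mu \<Longrightarrow> A \<subseteq> crit n \<Longrightarrow> 0 \<le> mu A"
  using capacity_mono[of L n mu "{}" A] by (simp add: capacity_def)

lemma minx_closed:
  assumes "finite A" "\<And>i. i \<in> A \<Longrightarrow> x i \<in> S" "1 \<in> S"
  shows "minx x A \<in> S"
proof (cases "A = {}")
  case False
  then have "Min (x ` A) \<in> x ` A"
    using assms(1) by simp
  then show ?thesis
    using False assms(2) by (auto simp: minx_def)
qed (simp add: minx_def assms(3))

lemma minx_nonneg: "A \<subseteq> crit n \<Longrightarrow> (\<And>i. i \<in> crit n \<Longrightarrow> 0 \<le> x i) \<Longrightarrow> 0 \<le> minx x A"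
  using minx_closed[of A x "{0..}"] finite_subset_crit by auto

lemma minx_le_one: "A \<subseteq> crit n \<Longrightarrow> (\<And>i. i \<in> crit n \<Longrightarrow> x i \<le> 1) \<Longrightarrow> minx x A \<le> 1"
  using minx_closed[of A x "{..1}"] finite_subset_crit by auto

lemma minx_antimono:
  assumes "Z \<noteq> {}" "Z \<subseteq> A" "finite A"
  shows "minx x A \<le> minx x Z"
  using assms unfolding minx_def by (auto intro!: Min_antimono image_mono)

lemma sugeno_ge: "A \<subseteq> crit n \<Longrightarrow> min (minx x A) (mu A) \<le> sugeno n mu x"
  unfolding sugeno_def by (rule Max_ge) (auto simp: crit_def)

lemma sugeno_le_iff: "sugeno n mu x \<le> c \<longleftrightarrow> (\<forall>A \<subseteq> crit n. min (minx x A) (mu A) \<le> c)"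
proof -
  have "{min (minx x A) (mu A) | A. A \<subseteq> crit n} = (\<lambda>A. min (minx x A) (mu A)) ` Pow (crit n)"
    by auto
  then show ?thesis
    unfolding sugeno_def by (subst Max_le_iff) (auto simp: crit_def)
qed

definition reduced_sugeno :: "nat \<Rightarrow> nat \<Rightarrow> (nat set \<Rightarrow> real) \<Rightarrow> (nat \<Rightarrow> real) \<Rightarrow> real" where
  "reduced_sugeno n q \<xi> x = Max ((\<lambda>A. min (minx x A) (\<xi> A)) ` small_sets n q)"

lemma reduced_consistent_iff:
  "reduced_consistent L n q N x alpha \<longleftrightarrow>
     (\<exists>\<xi>. (\<forall>A \<in> small_sets n q. \<xi> A \<in> L) \<and> (\<forall>k \<in> {1..N}. reduced_sugeno n q \<xi> (x k) = alpha k))"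
  by (simp add: reduced_consistent_def reduced_sugeno_def Setcompr_eq_image)

lemma reduced_sugeno_ge:
  "A \<in> small_sets n q \<Longrightarrow> min (minx x A) (\<xi> A) \<le> reduced_sugeno n q \<xi> x"
  unfolding reduced_sugeno_def by (simp add: Max_ge finite_small_sets)

lemma reduced_sugeno_le_iff:
  "small_sets n q \<noteq> {} \<Longrightarrow>
    reduced_sugeno n q \<xi> x \<le> c \<longleftrightarrow> (\<forall>A \<in> small_sets n q. min (minx x A) (\<xi> A) \<le> c)"
  unfolding reduced_sugeno_def by (simp add: finite_small_sets)

lemma reduced_sugeno_nonneg:
  assumes "small_sets n q \<noteq> {}" "\<And>A. A \<in> small_sets n q \<Longrightarrow> 0 \<le> \<xi> A"
    and "\<And>i. i \<in> crit n \<Longrightarrow> 0 \<le> x i"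
  shows "0 \<le> reduced_sugeno n q \<xi> x"
proof -
  obtain B where B: "B \<in> small_sets n q"
    using assms(1) by blast
  have "0 \<le> min (minx x B) (\<xi> B)"
    using B assms(2,3) minx_nonneg[OF small_sets_subset[OF B]] by simp
  also have "\<dots> \<le> reduced_sugeno n q \<xi> x"
    using B by (rule reduced_sugeno_ge)
  finally show ?thesis .
qed

lemma reduced_sugeno_fun_upd:
  assumes "A0 \<in> small_sets n q" "\<xi> A0 \<le> v" "min (minx x A0) v \<le> reduced_sugeno n q \<xi> x"
  shows "reduced_sugeno n q (\<xi>(A0 := v)) x = reduced_sugeno n q \<xi> x"
proof (rule antisym)
  have ne: "small_sets n q \<noteq> {}"
    using assms(1) by blast
  show "reduced_sugeno n q (\<xi>(A0 := v)) x \<le> reduced_sugeno n q \<xi> x"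
    using assms(3) by (auto simp: reduced_sugeno_le_iff[OF ne] reduced_sugeno_ge)
  show "reduced_sugeno n q \<xi> x \<le> reduced_sugeno n q (\<xi>(A0 := v)) x"
  proof (unfold reduced_sugeno_le_iff[OF ne], intro ballI)
    fix A assume A: "A \<in> small_sets n q"
    have "min (minx x A) (\<xi> A) \<le> min (minx x A) ((\<xi>(A0 := v)) A)"
      using assms(2) by (auto intro: min.mono)
    also have "\<dots> \<le> reduced_sugeno n q (\<xi>(A0 := v)) x"
      using A by (rule reduced_sugeno_ge)
    finally show "min (minx x A) (\<xi> A) \<le> reduced_sugeno n q (\<xi>(A0 := v)) x" .
  qed
qed

lemma q_maxitive_obtains_small_subset:
  assumes "q_maxitive n q mu" "A \<subseteq> crit n"
  obtains Y where "Y \<subseteq> A" "card Y \<le> q" "mu Y = mu A"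
proof (cases "card A \<le> q")
  case False
  have fin: "finite A"
    using assms(2) by (rule finite_subset_crit)
  let ?M = "{mu Y | Y. Y \<subset> A \<and> card Y \<le> q}"
  have "?M \<subseteq> mu ` Pow A"
    by auto
  then have "finite ?M"
    by (rule finite_subset) (simp add: fin)
  moreover have "mu {} \<in> ?M"
    using False by auto
  ultimately have "Max ?M \<in> ?M"
    by (intro Max_in) auto
  moreover have "mu A = Max ?M"
    using assms False unfolding q_maxitive_def by auto
  ultimately have "mu A \<in> ?M"
    by simp
  then obtain Y where "Y \<subset> A" "card Y \<le> q" "mu A = mu Y"
    by blast
  then show ?thesis
    using that[of Y] by simp
qed (use that in blast)

lemma sugeno_q_maxitive_eq_reduced_sugeno:
  assumes "q_maxitive n q mu" "mu {} = 0" "\<And>A. A \<subseteq> crit n \<Longrightarrow> 0 \<le> mu A"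
    and "small_sets n q \<noteq> {}" "\<And>i. i \<in> crit n \<Longrightarrow> 0 \<le> x i"
  shows "sugeno n mu x = reduced_sugeno n q mu x"
proof (rule antisym)
  have "min (minx x A) (mu A) \<le> reduced_sugeno n q mu x" if A: "A \<subseteq> crit n" for A
  proof -
    obtain Y where Y: "Y \<subseteq> A" "card Y \<le> q" "mu Y = mu A"
      using q_maxitive_obtains_small_subset[OF assms(1) A] .
    show ?thesis
    proof (cases "Y = {}")
      case True
      then have "min (minx x A) (mu A) \<le> 0"
        using Y assms(2) by simp
      also have "0 \<le> reduced_sugeno n q mu x"
        using assms(3-5) small_sets_subset by (intro reduced_sugeno_nonneg) auto
      finally show ?thesis .
    next
      case False
      have "finite A"
        using A by (rule finite_subset_crit)
      then have "Y \<in> small_sets n q"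
        using False Y A by (auto simp: small_sets_def card_gt_0_iff finite_subset)
      moreover have "min (minx x A) (mu A) \<le> min (minx x Y) (mu Y)"
        using minx_antimono[OF False Y(1) \<open>finite A\<close>, of x] Y(3) by (intro min.mono) simp_all
      ultimately show ?thesis
        using reduced_sugeno_ge order_trans by blast
    qed
  qed
  then show "sugeno n mu x \<le> reduced_sugeno n q mu x"
    by (simp add: sugeno_le_iff)
  show "reduced_sugeno n q mu x \<le> sugeno n mu x"
    using assms(4) by (simp add: reduced_sugeno_le_iff sugeno_ge small_sets_subset)
qed

lemma capacity_q_maxitive_obtains_top_set:
  assumes "capacity L n mu" "q_maxitive n q mu" "q \<le> n"
  obtains A where "A \<subseteq> crit n" "card A = q" "mu A = 1"
proof -
  obtain Y where Y: "Y \<subseteq> crit n" "card Y \<le> q" "mu Y = 1"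
    using q_maxitive_obtains_small_subset[OF assms(2), of "crit n"] assms(1)
    by (auto simp: capacity_def)
  obtain A where A: "Y \<subseteq> A" "A \<subseteq> crit n" "card A = q"
    using exists_subset_between[OF Y(2) _ Y(1)] assms(3) by (auto simp: crit_def)
  have "mu (crit n) = 1"
    using assms(1) by (simp add: capacity_def)
  then have "mu A = 1"
    using capacity_mono[OF assms(1) A(1,2)] capacity_mono[OF assms(1) A(2) order_refl] Y(3)
    by simp
  then show ?thesis
    using that A(2,3) by blast
qed

text \<open>The inserted 0 is the value on the empty set, the only set containing no small set.\<close>
definition maxitive_extension :: "nat \<Rightarrow> nat \<Rightarrow> (nat set \<Rightarrow> real) \<Rightarrow> nat set \<Rightarrow> real" where
  "maxitive_extension n q \<xi> X = Max (insert 0 (\<xi> ` {Y \<in> small_sets n q. Y \<subseteq> X}))"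

lemma finite_maxitive_extension_values: "finite (insert 0 (\<xi> ` {Y \<in> small_sets n q. Y \<subseteq> X}))"
  by (simp add: finite_small_sets)

lemma maxitive_extension_ge:
  "Y \<in> small_sets n q \<Longrightarrow> Y \<subseteq> X \<Longrightarrow> \<xi> Y \<le> maxitive_extension n q \<xi> X"
  unfolding maxitive_extension_def by (rule Max_ge[OF finite_maxitive_extension_values]) blast

lemma maxitive_extension_nonneg: "0 \<le> maxitive_extension n q \<xi> X"
  unfolding maxitive_extension_def by (rule Max_ge[OF finite_maxitive_extension_values]) blast

lemma maxitive_extension_cases:
  obtains "maxitive_extension n q \<xi> X = 0"
  | Y where "Y \<in> small_sets n q" "Y \<subseteq> X" "maxitive_extension n q \<xi> X = \<xi> Y"
proof -
  have "maxitive_extension n q \<xi> X \<in> insert 0 (\<xi> ` {Y \<in> small_sets n q. Y \<subseteq> X})"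
    unfolding maxitive_extension_def by (rule Max_in[OF finite_maxitive_extension_values]) blast
  then show ?thesis
    using that by blast
qed

lemma maxitive_extension_mono:
  assumes "X \<subseteq> X'"
  shows "maxitive_extension n q \<xi> X \<le> maxitive_extension n q \<xi> X'"
proof (cases rule: maxitive_extension_cases[of n q \<xi> X])
  case 1
  then show ?thesis
    by (simp add: maxitive_extension_nonneg)
next
  case (2 Y)
  then show ?thesis
    using assms maxitive_extension_ge[of Y n q X' \<xi>] by simp
qed

lemma maxitive_extension_empty: "maxitive_extension n q \<xi> {} = 0"
proof -
  have "{Y \<in> small_sets n q. Y \<subseteq> {}} = {}"
    by (auto simp: small_sets_def)
  then show ?thesis
    unfolding maxitive_extension_def by (simp only: image_empty) simp
qed

lemma q_maxitive_maxitive_extension: "q_maxitive n q (maxitive_extension n q \<xi>)"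
  unfolding q_maxitive_def
proof (intro allI impI)
  fix X assume X: "X \<subseteq> crit n \<and> q < card X"
  let ?mu = "maxitive_extension n q \<xi>"
  let ?M = "{?mu Y | Y. Y \<subset> X \<and> card Y \<le> q}"
  have "finite X"
    using X finite_subset_crit by blast
  have "?mu X \<in> ?M"
  proof (cases rule: maxitive_extension_cases[of n q \<xi> X])
    case 1
    have "{} \<subset> X"
      using X by auto
    moreover have "?mu X = ?mu {}"
      using 1 by (simp add: maxitive_extension_empty)
    ultimately show ?thesis
      by (intro CollectI exI[of _ "{}"]) simp
  next
    case (2 Y)
    have "card Y \<le> q"
      using 2(1) by (simp add: small_sets_def)
    then have "Y \<subset> X"
      using 2(2) X by auto
    have "\<xi> Y \<le> ?mu Y" "?mu Y \<le> ?mu X"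
      using maxitive_extension_ge[OF 2(1) order_refl] maxitive_extension_mono[OF 2(2)] by auto
    then have "?mu X = ?mu Y"
      using 2(3) by simp
    then show ?thesis
      using \<open>Y \<subset> X\<close> \<open>card Y \<le> q\<close> by (intro CollectI exI[of _ Y]) simp
  qed
  moreover have "?M \<subseteq> ?mu ` Pow X"
    by auto
  then have "finite ?M"
    by (rule finite_subset) (simp add: \<open>finite X\<close>)
  moreover have "\<forall>m \<in> ?M. m \<le> ?mu X"
    using maxitive_extension_mono by blast
  ultimately have "Max ?M = ?mu X"
    by (intro Max_eqI) auto
  then show "?mu X = Max ?M"
    by simp
qed

lemma capacity_maxitive_extension:
  assumes "\<And>A. A \<in> small_sets n q \<Longrightarrow> \<xi> A \<in> L" "0 \<in> L" "L \<subseteq> {0..1}"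
    and "A0 \<in> small_sets n q" "\<xi> A0 = 1"
  shows "capacity L n (maxitive_extension n q \<xi>)"
proof -
  have in_L: "maxitive_extension n q \<xi> X \<in> L" for X
    using assms(1,2) by (cases rule: maxitive_extension_cases[of n q \<xi> X]) auto
  have "maxitive_extension n q \<xi> (crit n) = 1"
  proof (rule antisym)
    show "maxitive_extension n q \<xi> (crit n) \<le> 1"
      using in_L[of "crit n"] assms(3) by auto
    show "1 \<le> maxitive_extension n q \<xi> (crit n)"
      using maxitive_extension_ge[OF assms(4) small_sets_subset[OF assms(4)], of \<xi>] assms(5) by simp
  qed
  then show ?thesis
    unfolding capacity_def
    by (simp add: in_L maxitive_extension_empty maxitive_extension_mono)
qed

lemma sugeno_maxitive_extension:
  assumes "small_sets n q \<noteq> {}" "\<And>A. A \<in> small_sets n q \<Longrightarrow> 0 \<le> \<xi> A"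
    and "\<And>i. i \<in> crit n \<Longrightarrow> 0 \<le> x i"
  shows "sugeno n (maxitive_extension n q \<xi>) x = reduced_sugeno n q \<xi> x"
proof (rule antisym)
  let ?mu = "maxitive_extension n q \<xi>"
  have "min (minx x A) (?mu A) \<le> reduced_sugeno n q \<xi> x" if A: "A \<subseteq> crit n" for A
  proof (cases rule: maxitive_extension_cases[of n q \<xi> A])
    case 1
    then have "min (minx x A) (?mu A) \<le> 0"
      by simp
    also have "0 \<le> reduced_sugeno n q \<xi> x"
      using assms by (rule reduced_sugeno_nonneg)
    finally show ?thesis .
  next
    case (2 Y)
    have "finite A"
      using A by (rule finite_subset_crit)
    have "Y \<noteq> {}"
      using 2(1) by (auto simp: small_sets_def)
    have "min (minx x A) (?mu A) \<le> min (minx x Y) (\<xi> Y)"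
      using minx_antimono[OF \<open>Y \<noteq> {}\<close> 2(2) \<open>finite A\<close>, of x] 2(3) by (intro min.mono) simp_all
    also have "\<dots> \<le> reduced_sugeno n q \<xi> x"
      using 2(1) by (rule reduced_sugeno_ge)
    finally show ?thesis .
  qed
  then show "sugeno n ?mu x \<le> reduced_sugeno n q \<xi> x"
    by (simp add: sugeno_le_iff)
  have "min (minx x A) (\<xi> A) \<le> sugeno n ?mu x" if A: "A \<in> small_sets n q" for A
  proof -
    have "min (minx x A) (\<xi> A) \<le> min (minx x A) (?mu A)"
      using maxitive_extension_ge[OF A order_refl] by (intro min.mono) simp_all
    also have "\<dots> \<le> sugeno n ?mu x"
      using A by (intro sugeno_ge small_sets_subset)
    finally show ?thesis .
  qed
  then show "reduced_sugeno n q \<xi> x \<le> sugeno n ?mu x"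
    using assms(1) by (simp add: reduced_sugeno_le_iff)
qed

lemma e_q_eq_1_iff:
  assumes "\<And>k. k \<in> {1..N} \<Longrightarrow> minx (x k) A \<le> 1"
  shows "e_q N x alpha A = 1 \<longleftrightarrow> (\<forall>k \<in> {1..N}. minx (x k) A \<le> alpha k)"
proof -
  let ?S = "insert 1 ((\<lambda>k. goedel_imp (minx (x k) A) (alpha k)) ` {1..N})"
  have "e_q N x alpha A = Min ?S"
    unfolding e_q_def Setcompr_eq_image ..
  moreover have "Min ?S \<le> 1"
    by (rule Min_le) auto
  ultimately have "e_q N x alpha A = 1 \<longleftrightarrow> 1 \<le> Min ?S"
    by (metis antisym order.refl)
  also have "\<dots> \<longleftrightarrow> (\<forall>k \<in> {1..N}. 1 \<le> goedel_imp (minx (x k) A) (alpha k))"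
    by (subst Min_ge_iff) auto
  also have "\<dots> \<longleftrightarrow> (\<forall>k \<in> {1..N}. minx (x k) A \<le> alpha k)"
    using assms by (force simp: goedel_imp_def)
  finally show ?thesis .
qed

lemma reduced_consistent_if_q_maxitive_solution:
  assumes "capacity L n mu" "q_maxitive n q mu" "1 \<le> q" "q \<le> n"
    and "\<And>k i. k \<in> {1..N} \<Longrightarrow> i \<in> crit n \<Longrightarrow> 0 \<le> x k i"
    and "\<And>k. k \<in> {1..N} \<Longrightarrow> sugeno n mu (x k) = alpha k"
  shows "reduced_consistent L n q N x alpha"
proof -
  have "reduced_sugeno n q mu (x k) = alpha k" if k: "k \<in> {1..N}" for k
  proof -
    have "sugeno n mu (x k) = reduced_sugeno n q mu (x k)"
    proof (rule sugeno_q_maxitive_eq_reduced_sugeno[OF assms(2)])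
      show "mu {} = 0"
        using assms(1) by (simp add: capacity_def)
      show "\<And>A. A \<subseteq> crit n \<Longrightarrow> 0 \<le> mu A"
        using assms(1) by (rule capacity_nonneg)
      show "small_sets n q \<noteq> {}"
        using assms(3,4) by (rule small_sets_not_empty)
      show "\<And>i. i \<in> crit n \<Longrightarrow> 0 \<le> x k i"
        using assms(5)[OF k] .
    qed
    then show ?thesis
      using assms(6)[OF k] by simp
  qed
  moreover have "\<forall>A \<in> small_sets n q. mu A \<in> L"
    using assms(1) by (auto simp: capacity_def small_sets_def)
  ultimately show ?thesis
    unfolding reduced_consistent_iff by blast
qed

lemma q_maxitive_solution_obtains_e_q_eq_1:
  assumes "capacity L n mu" "q_maxitive n q mu" "q \<le> n"
    and "\<And>k i. k \<in> {1..N} \<Longrightarrow> i \<in> crit n \<Longrightarrow> x k i \<le> 1"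
    and "\<And>k. k \<in> {1..N} \<Longrightarrow> sugeno n mu (x k) = alpha k"
  obtains A where "A \<subseteq> crit n" "card A = q" "e_q N x alpha A = 1"
proof -
  obtain A where A: "A \<subseteq> crit n" "card A = q" "mu A = 1"
    using capacity_q_maxitive_obtains_top_set[OF assms(1-3)] .
  have minx_le: "minx (x k) A \<le> 1" if "k \<in> {1..N}" for k
    using A(1) assms(4)[OF that] by (rule minx_le_one)
  have "minx (x k) A \<le> alpha k" if k: "k \<in> {1..N}" for k
    using sugeno_ge[OF A(1), of "x k" mu] A(3) minx_le[OF k] assms(5)[OF k] by simp
  then have "e_q N x alpha A = 1"
    using e_q_eq_1_iff[of N x A alpha, OF minx_le] by simp
  then show ?thesis
    using that A(1,2) by blast
qed

lemma q_maxitive_solution_if_reduced_solution: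
  assumes "valid_scale L" "\<forall>A \<in> small_sets n q. \<xi> A \<in> L"
    and "\<forall>k \<in> {1..N}. reduced_sugeno n q \<xi> (x k) = alpha k"
    and "A0 \<in> small_sets n q" "\<forall>k \<in> {1..N}. minx (x k) A0 \<le> alpha k"
    and "\<And>k i. k \<in> {1..N} \<Longrightarrow> i \<in> crit n \<Longrightarrow> 0 \<le> x k i"
  shows "\<exists>mu. capacity L n mu \<and> q_maxitive n q mu \<and> (\<forall>k \<in> {1..N}. sugeno n mu (x k) = alpha k)"
proof -
  have L: "0 \<in> L" "1 \<in> L" "L \<subseteq> {0..1}"
    using assms(1) by (auto simp: valid_scale_def)
  define \<xi>' where "\<xi>' = \<xi>(A0 := 1)"
  have \<xi>'_L: "\<forall>A \<in> small_sets n q. \<xi>' A \<in> L"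
    using assms(2) L(2) by (simp add: \<xi>'_def)
  have "reduced_sugeno n q \<xi>' (x k) = alpha k" if k: "k \<in> {1..N}" for k
  proof -
    have "\<xi> A0 \<le> 1"
      using assms(2,4) L(3) by auto
    moreover have "min (minx (x k) A0) 1 \<le> reduced_sugeno n q \<xi> (x k)"
      using assms(3,5) k by (simp add: min.coboundedI1)
    ultimately show ?thesis
      unfolding \<xi>'_def using reduced_sugeno_fun_upd[OF assms(4)] assms(3) k by simp
  qed
  moreover have "small_sets n q \<noteq> {}" "\<And>A. A \<in> small_sets n q \<Longrightarrow> 0 \<le> \<xi>' A"
    using assms(4) \<xi>'_L L(3) by auto
  ultimately have "sugeno n (maxitive_extension n q \<xi>') (x k) = alpha k" if k: "k \<in> {1..N}" for k
    using sugeno_maxitive_extension[where x = "x k", OF _ _ assms(6)[OF k]] k by simp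
  moreover have "capacity L n (maxitive_extension n q \<xi>')"
    using \<xi>'_L L(1,3) assms(4) by (intro capacity_maxitive_extension) (auto simp: \<xi>'_def)
  ultimately show ?thesis
    using q_maxitive_maxitive_extension by blast
qed

theorem theorem2:
  fixes L :: "real set" and n q N :: nat
    and x :: "nat \<Rightarrow> nat \<Rightarrow> real" and alpha :: "nat \<Rightarrow> real"
  assumes "valid_scale L"
    and "1 \<le> q" and "q \<le> n"
    and "\<forall>k \<in> {1..N}. \<forall>i \<in> crit n. x k i \<in> L"
    and "\<forall>k \<in> {1..N}. alpha k \<in> L"
  shows "(\<exists>mu. capacity L n mu \<and> q_maxitive n q mu \<and>
            (\<forall>k \<in> {1..N}. sugeno n mu (x k) = alpha k))
     \<longleftrightarrow> (reduced_consistent L n q N x alpha \<and>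
          (\<exists>A. A \<subseteq> crit n \<and> card A = q \<and> e_q N x alpha A = 1))"
proof -
  have "L \<subseteq> {0..1}"
    using assms(1) by (simp add: valid_scale_def)
  then have x_nonneg: "0 \<le> x k i" and x_le_1: "x k i \<le> 1" if "k \<in> {1..N}" "i \<in> crit n" for k i
    using assms(4) that by fastforce+
  show ?thesis
  proof
    assume "\<exists>mu. capacity L n mu \<and> q_maxitive n q mu \<and> (\<forall>k \<in> {1..N}. sugeno n mu (x k) = alpha k)"
    then obtain mu where cap: "capacity L n mu" and max: "q_maxitive n q mu"
      and sol: "\<And>k. k \<in> {1..N} \<Longrightarrow> sugeno n mu (x k) = alpha k"
      by blast
    show "reduced_consistent L n q N x alpha \<and> (\<exists>A. A \<subseteq> crit n \<and> card A = q \<and> e_q N x alpha A = 1)"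
      using reduced_consistent_if_q_maxitive_solution[where x = x, OF cap max assms(2,3) x_nonneg sol]
        q_maxitive_solution_obtains_e_q_eq_1[where x = x, OF cap max assms(3) x_le_1 sol]
      by blast
  next
    assume "reduced_consistent L n q N x alpha \<and> (\<exists>A. A \<subseteq> crit n \<and> card A = q \<and> e_q N x alpha A = 1)"
    then obtain \<xi> A0 where \<xi>: "\<forall>A \<in> small_sets n q. \<xi> A \<in> L"
      and sol: "\<forall>k \<in> {1..N}. reduced_sugeno n q \<xi> (x k) = alpha k"
      and A0: "A0 \<subseteq> crit n" "card A0 = q" "e_q N x alpha A0 = 1"
      by (auto simp: reduced_consistent_iff)
    have "minx (x k) A0 \<le> 1" if "k \<in> {1..N}" for k
      using A0(1) x_le_1[OF that] by (rule minx_le_one)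
    then have "\<forall>k \<in> {1..N}. minx (x k) A0 \<le> alpha k"
      using A0(3) e_q_eq_1_iff[of N x A0 alpha] by simp
    moreover have "A0 \<in> small_sets n q"
      using A0 assms(2) by (simp add: small_sets_def)
    ultimately show "\<exists>mu. capacity L n mu \<and> q_maxitive n q mu \<and> (\<forall>k \<in> {1..N}. sugeno n mu (x k) = alpha k)"
      using q_maxitive_solution_if_reduced_solution[where x = x, OF assms(1) \<xi> sol _ _ x_nonneg]
      by blast
  qed
qed

end
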